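(* Let $G$ be a graph containing no cycle of length 6 and let $x\in V(G)$. Then $x$ is extendable in $G$ if and only if $x$ is extendable in $H_x$.
   Context: All graphs are finite, simple and undirected; "containing no cycle of length 6" means having no subgraph (not necessarily induced) isomorphic to $C_6$. For a vertex set $S$, $N_i(S)$ is the set of vertices at distance exactly $i$ from $S$, $N_i[S]$ the set at distance at most $i$, $N(S)=N_1(S)$, $N[S]=N_1[S]$, and $N(v)=N(\{v\})$ etc.; $S$ dominates $T$ if $T\subseteq N[S]$. A vertex $v$ of a graph $H$ is extendable in $H$ if there is no independent set $S\subseteq N_2(v)$ (distances computed in $H$) dominating $N(v)$ (in $H$). Let $A^*$ be the set of connected components $A$ of $G[N_2(x)]$ for which there exists a vertex $a\in V(A)$ with $N(x)\cap N(a)=N(x)\cap N(V(A))$, and let $V(A^* )$ be the union of their vertex sets. Define $H_x=G[N_2[x]\setminus N[V(A^* )]]$ (neighbourhoods taken in $G$). *)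

theory Defs
  imports Main
begin

text \<open>A graph is given by a vertex set V and an edge relation E. Notions "in the induced
subgraph G[W]" are obtained by replacing V by W (all notions only use vertices of V).\<close>

definition graph :: "'a set \<Rightarrow> ('a \<Rightarrow> 'a \<Rightarrow> bool) \<Rightarrow> bool" where
  "graph V E \<longleftrightarrow> finite V \<and> (\<forall>u v. E u v \<longrightarrow> E v u) \<and> (\<forall>u. \<not> E u u)
     \<and> (\<forall>u v. E u v \<longrightarrow> u \<in> V \<and> v \<in> V)"

definition c6_free :: "'a set \<Rightarrow> ('a \<Rightarrow> 'a \<Rightarrow> bool) \<Rightarrow> bool" where
  "c6_free V E \<longleftrightarrow> \<not> (\<exists>f :: nat \<Rightarrow> 'a. inj_on f {..<6} \<and> f ` {..<6} \<subseteq> V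
      \<and> (\<forall>i<6. E (f i) (f ((i + 1) mod 6))))"

inductive walk :: "'a set \<Rightarrow> ('a \<Rightarrow> 'a \<Rightarrow> bool) \<Rightarrow> 'a \<Rightarrow> 'a \<Rightarrow> nat \<Rightarrow> bool"
  for V E where
  walk0: "u \<in> V \<Longrightarrow> walk V E u u 0"
| walkS: "u \<in> V \<Longrightarrow> E u w \<Longrightarrow> walk V E w v n \<Longrightarrow> walk V E u v (Suc n)"

definition ball :: "'a set \<Rightarrow> ('a \<Rightarrow> 'a \<Rightarrow> bool) \<Rightarrow> nat \<Rightarrow> 'a set \<Rightarrow> 'a set" where
  "ball V E k S = {v \<in> V. \<exists>s\<in>S. \<exists>n\<le>k. walk V E s v n}"

fun sphere :: "'a set \<Rightarrow> ('a \<Rightarrow> 'a \<Rightarrow> bool) \<Rightarrow> nat \<Rightarrow> 'a set \<Rightarrow> 'a set" where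
  "sphere V E 0 S = ball V E 0 S"
| "sphere V E (Suc k) S = ball V E (Suc k) S - ball V E k S"

abbreviation nbhd :: "'a set \<Rightarrow> ('a \<Rightarrow> 'a \<Rightarrow> bool) \<Rightarrow> 'a set \<Rightarrow> 'a set" where
  "nbhd V E S \<equiv> sphere V E 1 S"

definition independent :: "('a \<Rightarrow> 'a \<Rightarrow> bool) \<Rightarrow> 'a set \<Rightarrow> bool" where
  "independent E S \<longleftrightarrow> (\<forall>u\<in>S. \<forall>w\<in>S. \<not> E u w)"

definition dominates :: "'a set \<Rightarrow> ('a \<Rightarrow> 'a \<Rightarrow> bool) \<Rightarrow> 'a set \<Rightarrow> 'a set \<Rightarrow> bool" where
  "dominates V E S T \<longleftrightarrow> T \<subseteq> ball V E 1 S"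

definition extendable :: "'a set \<Rightarrow> ('a \<Rightarrow> 'a \<Rightarrow> bool) \<Rightarrow> 'a \<Rightarrow> bool" where
  "extendable V E v \<longleftrightarrow> \<not> (\<exists>S. S \<subseteq> sphere V E 2 {v} \<and> independent E S
       \<and> dominates V E S (nbhd V E {v}))"

definition components :: "'a set \<Rightarrow> ('a \<Rightarrow> 'a \<Rightarrow> bool) \<Rightarrow> 'a set set" where
  "components V E = {{b \<in> V. \<exists>n. walk V E a b n} | a. a \<in> V}"

text \<open>V(A*): union of components A of G[N_2(x)] having a vertex a with
  N(x) \<inter> N(a) = N(x) \<inter> N(V(A)) (neighbourhoods in G).\<close>
definition Astar :: "'a set \<Rightarrow> ('a \<Rightarrow> 'a \<Rightarrow> bool) \<Rightarrow> 'a \<Rightarrow> 'a set" where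
  "Astar V E x = \<Union>{A \<in> components (sphere V E 2 {x}) E.
      \<exists>a\<in>A. nbhd V E {x} \<inter> nbhd V E {a} = nbhd V E {x} \<inter> nbhd V E A}"

text \<open>Vertex set of H_x = G[N_2[x] - N[V(A*)]].\<close>
definition Hx :: "'a set \<Rightarrow> ('a \<Rightarrow> 'a \<Rightarrow> bool) \<Rightarrow> 'a \<Rightarrow> 'a set" where
  "Hx V E x = ball V E 2 {x} - ball V E 1 (Astar V E x)"

end

theory Submission imports Defs begin

text \<open>An independent set \<open>S \<subseteq> N\<^sub>2(x)\<close> dominating \<open>N(x)\<close> in \<open>G\<close> restricts to one for \<open>H\<^sub>x\<close>:
  a vertex of \<open>S\<close> dominating some \<open>v \<in> N(x) \<inter> V(H\<^sub>x)\<close> is not in \<open>V(A*)\<close>, as \<open>v\<close> has no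
  neighbour there, and has no neighbour in \<open>V(A*)\<close>, as the components of \<open>G[N\<^sub>2(x)]\<close> are closed
  under adjacency inside \<open>N\<^sub>2(x)\<close>; so it lies in \<open>H\<^sub>x\<close>. Conversely, a set for \<open>H\<^sub>x\<close> extends to
  one for \<open>G\<close> by adding, for each \<open>A \<in> A*\<close>, a vertex \<open>a\<close> with \<open>N(x) \<inter> N(a) = N(x) \<inter> N(V(A))\<close>,
  which dominates every neighbour of \<open>x\<close> adjacent to \<open>A\<close>. These vertices lie in distinct
  components, hence are pairwise non-adjacent, and have no neighbour in \<open>H\<^sub>x\<close>.\<close>

lemma graph_symD: "graph V E \<Longrightarrow> E u v \<Longrightarrow> E v u"
  and graph_irreflD: "graph V E \<Longrightarrow> \<not> E u u"
  and graph_edgeD: "graph V E \<Longrightarrow> E u v \<Longrightarrow> u \<in> V \<and> v \<in> V"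
  unfolding graph_def by blast+

lemma walk_0_iff: "walk V E u v 0 \<longleftrightarrow> u = v \<and> u \<in> V"
  by (auto elim: walk.cases intro: walk0)

lemma walk_Suc_iff: "walk V E u v (Suc n) \<longleftrightarrow> u \<in> V \<and> (\<exists>w. E u w \<and> walk V E w v n)"
  by (auto elim: walk.cases intro: walkS)

lemma walk_snoc: "walk V E u v n \<Longrightarrow> E v w \<Longrightarrow> w \<in> V \<Longrightarrow> walk V E u w (Suc n)"
  by (induction u v n rule: walk.induct) (auto intro: walk.intros)

lemma walk_append: "walk V E u v n \<Longrightarrow> walk V E v w m \<Longrightarrow> walk V E u w (n + m)"
  by (induction rule: walk.induct) (auto intro: walk.intros)

lemma walk_rev:
  assumes "\<And>a b. E a b \<Longrightarrow> E b a" and "walk V E u v n"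
  shows "walk V E v u n"
  using assms(2) by (induction u v n rule: walk.induct) (auto intro: walk.intros walk_snoc assms(1))

lemma ball_1: "ball V E 1 S = {v \<in> V. \<exists>s\<in>S. s \<in> V \<and> (s = v \<or> E s v)}"
proof -
  have "(n::nat) \<le> 1 \<longleftrightarrow> n = 0 \<or> n = Suc 0" for n
    by auto
  then have "(\<exists>n::nat. n \<le> 1 \<and> P n) \<longleftrightarrow> P 0 \<or> P (Suc 0)" for P
    by auto
  then show ?thesis
    unfolding ball_def by (auto simp: walk_0_iff walk_Suc_iff)
qed

lemma ball_2:
  "ball V E 2 S = {v \<in> V. \<exists>s\<in>S. s \<in> V \<and> (s = v \<or> E s v \<or> (\<exists>w\<in>V. E s w \<and> E w v))}"
proof -
  have "(n::nat) \<le> 2 \<longleftrightarrow> n = 0 \<or> n = Suc 0 \<or> n = Suc (Suc 0)" for n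
    by auto
  then have "(\<exists>n::nat. n \<le> 2 \<and> P n) \<longleftrightarrow> P 0 \<or> P (Suc 0) \<or> P (Suc (Suc 0))" for P
    by auto
  then show ?thesis
    unfolding ball_def by (auto simp: walk_0_iff walk_Suc_iff)
qed

lemma sphere_1: "sphere V E 1 S = ball V E 1 S - S"
proof -
  have "sphere V E 1 S = ball V E 1 S - ball V E 0 S"
    by (simp add: One_nat_def)
  moreover have "ball V E 0 S = S \<inter> V"
    unfolding ball_def by (auto simp: walk_0_iff)
  moreover have "ball V E 1 S \<subseteq> V"
    unfolding ball_def by blast
  ultimately show ?thesis
    by blast
qed

lemma sphere_2: "sphere V E 2 S = ball V E 2 S - ball V E 1 S"
  by (metis One_nat_def numeral_2_eq_2 sphere.simps(2))

lemma ball_1_mono: "V' \<subseteq> V \<Longrightarrow> S \<subseteq> S' \<Longrightarrow> ball V' E 1 S \<subseteq> ball V E 1 S'"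
  unfolding ball_1 by blast

lemma nbhd_singleton: "(\<And>u. \<not> E u u) \<Longrightarrow> x \<in> V \<Longrightarrow> nbhd V E {x} = {v \<in> V. E x v}"
  unfolding sphere_1 ball_1 by auto

lemma sphere_2_singleton:
  "x \<in> V \<Longrightarrow> sphere V E 2 {x} = {v \<in> V. v \<noteq> x \<and> \<not> E x v \<and> (\<exists>w\<in>V. E x w \<and> E w v)}"
  unfolding sphere_2 ball_1 ball_2 by auto

lemma component_subset: "A \<in> components W E \<Longrightarrow> A \<subseteq> W"
  unfolding components_def by auto

lemma component_closed: "A \<in> components W E \<Longrightarrow> a \<in> A \<Longrightarrow> b \<in> W \<Longrightarrow> E a b \<Longrightarrow> b \<in> A"
  unfolding components_def by (auto intro: walk_snoc)

lemma component_eq_reachable: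
  assumes "\<And>a b. E a b \<Longrightarrow> E b a" and "A \<in> components W E" and "c \<in> A"
  shows "A = {b \<in> W. \<exists>n. walk W E c b n}"
proof -
  obtain r where A: "A = {b \<in> W. \<exists>n. walk W E r b n}"
    using assms(2) unfolding components_def by auto
  then obtain n where rc: "walk W E r c n"
    using assms(3) by auto
  then have "walk W E c r n"
    using walk_rev[of E, OF assms(1)] by blast
  with rc show ?thesis
    unfolding A by (blast intro: walk_append)
qed

lemma components_adjacent_eq:
  assumes "\<And>a b. E a b \<Longrightarrow> E b a"
    and "A \<in> components W E" "B \<in> components W E" "a \<in> A" "b \<in> B" "E a b"
  shows "A = B"
proof -
  have "b \<in> A"
    using component_closed[OF assms(2,4) _ assms(6)] component_subset[OF assms(3)] assms(5) by blast
  then show ?thesis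
    using component_eq_reachable[of E, OF assms(1,2)] component_eq_reachable[of E, OF assms(1,3,5)]
    by simp
qed

lemma independent_representatives:
  assumes "\<And>a b. E a b \<Longrightarrow> E b a" and "\<And>u. \<not> E u u"
    and "C \<subseteq> components W E" and "\<And>A. A \<in> C \<Longrightarrow> rep A \<in> A"
  shows "independent E (rep ` C)"
  unfolding independent_def
proof (intro ballI notI)
  fix u w assume "u \<in> rep ` C" "w \<in> rep ` C" "E u w"
  then obtain A B where "A \<in> C" "B \<in> C" "u = rep A" "w = rep B" "E (rep A) (rep B)"
    by blast
  moreover from this have "A = B"
    using components_adjacent_eq[of E, OF assms(1)] assms(3,4) by blast
  ultimately show False
    using assms(2) by metis
qed

definition Astar_components :: "'a set \<Rightarrow> ('a \<Rightarrow> 'a \<Rightarrow> bool) \<Rightarrow> 'a \<Rightarrow> 'a set set" where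
  "Astar_components V E x = {A \<in> components (sphere V E 2 {x}) E.
      \<exists>a\<in>A. nbhd V E {x} \<inter> nbhd V E {a} = nbhd V E {x} \<inter> nbhd V E A}"

lemma Astar_eq_Union: "Astar V E x = \<Union>(Astar_components V E x)"
  unfolding Astar_def Astar_components_def by simp

context
  fixes V :: "'a set" and E :: "'a \<Rightarrow> 'a \<Rightarrow> bool" and x :: 'a
  assumes graph: "graph V E" and x_in: "x \<in> V"
begin

lemma edge_sym: "E u v \<Longrightarrow> E v u"
  using graph by (rule graph_symD)

lemma edge_irrefl: "\<not> E u u"
  using graph by (rule graph_irreflD)

lemma edge_in: "E u v \<Longrightarrow> u \<in> V \<and> v \<in> V"
  using graph by (rule graph_edgeD)

lemma nbhd_x: "nbhd V E {x} = {v \<in> V. E x v}"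
  using nbhd_singleton[of E, OF edge_irrefl x_in] .

lemma sphere_2_x: "sphere V E 2 {x} = {v \<in> V. v \<noteq> x \<and> \<not> E x v \<and> (\<exists>w\<in>V. E x w \<and> E w v)}"
  using sphere_2_singleton[OF x_in] .

lemma Astar_components_subset: "A \<in> Astar_components V E x \<Longrightarrow> A \<subseteq> sphere V E 2 {x}"
  unfolding Astar_components_def by (blast dest: component_subset)

lemma Astar_subset_sphere: "Astar V E x \<subseteq> sphere V E 2 {x}"
  unfolding Astar_eq_Union using Astar_components_subset by (rule Union_least)

lemma Astar_closed:
  assumes "s \<in> sphere V E 2 {x}" "c \<in> Astar V E x" "E c s"
  shows "s \<in> Astar V E x"
proof -
  obtain A where A: "A \<in> Astar_components V E x" "c \<in> A"
    using assms(2) unfolding Astar_eq_Union by blast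
  then have "s \<in> A"
    using A component_closed[of A "sphere V E 2 {x}" E c s] assms(1,3)
    unfolding Astar_components_def by blast
  with A show ?thesis
    unfolding Astar_eq_Union by blast
qed

lemma Hx_eq: "Hx V E x = {v \<in> V. (v = x \<or> E x v \<or> (\<exists>w\<in>V. E x w \<and> E w v))
    \<and> v \<notin> Astar V E x \<and> (\<forall>s\<in>Astar V E x. \<not> E s v)}"
  using Astar_subset_sphere x_in
  unfolding Hx_def ball_1 ball_2 sphere_2_x by auto

lemma x_in_Hx: "x \<in> Hx V E x"
  using Astar_subset_sphere x_in edge_sym
  unfolding Hx_eq sphere_2_x by auto

lemma Hx_subset: "Hx V E x \<subseteq> V"
  unfolding Hx_eq by blast

lemma Hx_not_adjacent_Astar: "v \<in> Hx V E x \<Longrightarrow> s \<in> Astar V E x \<Longrightarrow> \<not> E s v \<and> \<not> E v s"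
  unfolding Hx_eq using edge_sym by blast

lemma nbhd_x_Hx: "nbhd (Hx V E x) E {x} = {v \<in> Hx V E x. E x v}"
  using nbhd_singleton[of E, OF edge_irrefl x_in_Hx] .

lemma sphere_2_x_Hx: "sphere (Hx V E x) E 2 {x}
    = {v \<in> Hx V E x. v \<noteq> x \<and> \<not> E x v \<and> (\<exists>w\<in>Hx V E x. E x w \<and> E w v)}"
  using sphere_2_singleton[OF x_in_Hx] .

lemma sphere_2_Hx_subset: "sphere (Hx V E x) E 2 {x} \<subseteq> sphere V E 2 {x}"
  using Hx_subset unfolding sphere_2_x sphere_2_x_Hx by blast

lemma Astar_representative_adjacent:
  assumes "A \<in> Astar_components V E x" "a \<in> A"
    and "nbhd V E {x} \<inter> nbhd V E {a} = nbhd V E {x} \<inter> nbhd V E A"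
    and "v \<in> nbhd V E {x}" "c \<in> A" "E c v"
  shows "E a v"
proof -
  have "v \<notin> A"
    using Astar_components_subset[OF assms(1)] assms(4) unfolding sphere_2_x nbhd_x by blast
  moreover have "c \<in> V"
    using assms(6) edge_in by blast
  ultimately have "v \<in> nbhd V E A"
    using assms(4-6) unfolding nbhd_x sphere_1 ball_1 by blast
  with assms(3,4) have "v \<in> nbhd V E {a}"
    by blast
  then show ?thesis
    unfolding sphere_1 ball_1 by blast
qed

lemma dominating_set_lift:
  assumes S: "S \<subseteq> sphere (Hx V E x) E 2 {x}" "independent E S"
    "dominates (Hx V E x) E S (nbhd (Hx V E x) E {x})"
  shows "\<exists>T. T \<subseteq> sphere V E 2 {x} \<and> independent E T \<and> dominates V E T (nbhd V E {x})"
proof -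
  let ?C = "Astar_components V E x"
  have "\<forall>A\<in>?C. \<exists>a. a \<in> A \<and> nbhd V E {x} \<inter> nbhd V E {a} = nbhd V E {x} \<inter> nbhd V E A"
    unfolding Astar_components_def by blast
  then obtain rep where rep_in: "\<And>A. A \<in> ?C \<Longrightarrow> rep A \<in> A"
    and rep_nbhd: "\<And>A. A \<in> ?C \<Longrightarrow> nbhd V E {x} \<inter> nbhd V E {rep A} = nbhd V E {x} \<inter> nbhd V E A"
    by (metis bchoice)
  define T where "T = S \<union> rep ` ?C"
  have rep_Astar: "rep ` ?C \<subseteq> Astar V E x"
    unfolding Astar_eq_Union using rep_in by blast
  have "T \<subseteq> sphere V E 2 {x}"
    unfolding T_def using S(1) sphere_2_Hx_subset rep_Astar Astar_subset_sphere by blast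
  moreover have "independent E T"
  proof -
    have "S \<subseteq> Hx V E x"
      using S(1) unfolding sphere_2_x_Hx by blast
    moreover have "independent E (rep ` ?C)"
      by (rule independent_representatives[of E, OF edge_sym edge_irrefl _ rep_in])
        (auto simp: Astar_components_def)
    ultimately show ?thesis
      using S(2) rep_Astar Hx_not_adjacent_Astar unfolding T_def independent_def by blast
  qed
  moreover have "nbhd V E {x} \<subseteq> ball V E 1 T"
  proof
    fix v assume v: "v \<in> nbhd V E {x}"
    then have v_in: "v \<in> V" "E x v"
      unfolding nbhd_x by auto
    show "v \<in> ball V E 1 T"
    proof (cases "\<exists>c\<in>Astar V E x. E c v")
      case True
      then obtain A c where A: "A \<in> ?C" "c \<in> A" "E c v"
        unfolding Astar_eq_Union by blast
      have rep_v: "E (rep A) v"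
        using Astar_representative_adjacent[OF A(1) rep_in[OF A(1)] rep_nbhd[OF A(1)] v A(2,3)] .
      moreover have "rep A \<in> T"
        using A(1) unfolding T_def by blast
      moreover have "rep A \<in> V"
        using edge_in[OF rep_v] by blast
      ultimately show ?thesis
        unfolding ball_1 using v_in by blast
    next
      case False
      moreover have "v \<notin> Astar V E x"
        using Astar_subset_sphere v_in unfolding sphere_2_x by blast
      ultimately have "v \<in> Hx V E x"
        unfolding Hx_eq using v_in by blast
      then have "v \<in> ball (Hx V E x) E 1 S"
        using S(3) v_in(2) unfolding dominates_def nbhd_x_Hx by blast
      then show ?thesis
        using ball_1_mono[OF Hx_subset, of S T E] unfolding T_def by blast
    qed
  qed
  ultimately show ?thesis
    unfolding dominates_def by blast
qed

lemma dominating_set_restrict: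
  assumes S: "S \<subseteq> sphere V E 2 {x}" "independent E S" "dominates V E S (nbhd V E {x})"
  defines "S' \<equiv> S \<inter> sphere (Hx V E x) E 2 {x}"
  shows "independent E S' \<and> dominates (Hx V E x) E S' (nbhd (Hx V E x) E {x})"
proof -
  have "v \<in> ball (Hx V E x) E 1 S'" if v: "v \<in> nbhd (Hx V E x) E {x}" for v
  proof -
    have v_in: "v \<in> Hx V E x" "E x v"
      using v unfolding nbhd_x_Hx by auto
    then have "v \<in> nbhd V E {x}"
      using Hx_subset unfolding nbhd_x by blast
    then obtain s where s: "s \<in> S" "s = v \<or> E s v"
      using S(3) unfolding dominates_def ball_1 by blast
    have s_N2: "s \<in> sphere V E 2 {x}"
      using s S(1) by blast
    then have sv: "E s v"
      using s v_in unfolding sphere_2_x by blast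
    have "s \<notin> Astar V E x"
      using Hx_not_adjacent_Astar v_in(1) sv by blast
    then have s_Hx: "s \<in> Hx V E x"
      using Astar_closed[OF s_N2] s_N2 unfolding Hx_eq sphere_2_x by blast
    then have "s \<in> S'"
      using s s_N2 v_in sv edge_sym unfolding S'_def sphere_2_x_Hx sphere_2_x by blast
    then show ?thesis
      unfolding ball_1 using v_in sv s_Hx by blast
  qed
  moreover have "independent E S'"
    using S(2) unfolding S'_def independent_def by blast
  ultimately show ?thesis
    unfolding dominates_def by blast
qed

end

theorem lemma2p8:
  fixes V :: "'a set" and E :: "'a \<Rightarrow> 'a \<Rightarrow> bool" and x :: 'a
  assumes "graph V E" and "c6_free V E" and "x \<in> V"
  shows "extendable V E x \<longleftrightarrow> extendable (Hx V E x) E x"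
  unfolding extendable_def
  using dominating_set_lift[OF assms(1,3)] dominating_set_restrict[OF assms(1,3)]
  by (meson Int_lower2)

end
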